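(* In the construction described in the context, $\sum_{i=1}^{t-1}c(C_i)\le 2B\log t\le 2B\log n$.
   Context: $\log$ denotes $\log_2$; $c(F)=\sum_{f\in F}c(f)$. Setting: $G=(V,E)$ is a connected finite undirected graph (parallel edges allowed), $w:E\to\mathbb{R}_{\ge0}$ edge weights, $c:E\to\mathbb{R}_{>0}$ edge costs, $n=|V|$. For $S\subseteq V$, $C_G(S)=\{e\in E:|e\cap S|=1\}$ (complete cut; its edges cross it) and $C_G(S,W)=\{e\in C_G(S):w(e)<W\}$ (partial cut). $F\subseteq E$ is a set with $G'=G\setminus F=(V,E\setminus F)$ connected; $B=c(F)$ and $\Delta=\mathrm{MST}(G')-\mathrm{MST}(G)$ (MST weights w.r.t. $w$). Construction: let $T$ be a minimum spanning tree of $G$ and $T\cap F=\{e_1,\dots,e_{t-1}\}$, with $t\ge2$. Removing these edges splits $T$ into components with vertex sets $A_1,\dots,A_t$ (a partition of $V$). Let $G'_{cc}$ be the multigraph with vertex set $V_{cc}=\{A_1,\dots,A_t\}$ having, for every edge $\{u,v\}\in E\setminus F$ with $u\in A_i$, $v\in A_j$, an edge between $A_i$ and $A_j$ of weight $w(\{u,v\})$ (identified with the original edge). Let $T'_{cc}$ be a minimum spanning tree of $G'_{cc}$, with edges $e'_1,\dots,e'_{t-1}$ indexed so that $w(e'_1)\le\dots\le w(e'_{t-1})$ (ties broken arbitrarily). For each $i$, deleting $e'_i,e'_{i+1},\dots,e'_{t-1}$ from $T'_{cc}$ leaves a forest in which $e'_i$ joins two components $L_i,R_i\subseteq V_{cc}$.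 Counters $k(A)=0$ for all $A\in V_{cc}$ initially, and $k(S)=\max_{A\in S}k(A)$. For $i=1,\dots,t-1$ in order: set $X_i=L_i$ if $k(L_i)\le k(R_i)$, else $X_i=R_i$; then increase $k(A)$ by $1$ for every $A\in X_i$. Identifying a set of vertices of $G'_{cc}$ with the union of the corresponding vertex sets in $V$, define $C_i=C_G(X_i,w(e'_i))$. *)

theory Defs
  imports Complex_Main
begin

(* Multigraphs: vertices of type 'a, abstract edges of type 'e; ends e = (u,v)
   gives the two (unordered) endpoints of edge e; parallel edges allowed. *)

definition reach :: "('e \<Rightarrow> 'a \<times> 'a) \<Rightarrow> 'e set \<Rightarrow> 'a \<Rightarrow> 'a \<Rightarrow> bool" where
  "reach ends S = (\<lambda>u v. \<exists>e\<in>S. ends e = (u, v) \<or> ends e = (v, u))\<^sup>*\<^sup>*"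

definition connected_sub :: "'a set \<Rightarrow> ('e \<Rightarrow> 'a \<times> 'a) \<Rightarrow> 'e set \<Rightarrow> bool" where
  "connected_sub V ends S = (\<forall>u\<in>V. \<forall>v\<in>V. reach ends S u v)"

definition spanning_tree :: "'a set \<Rightarrow> ('e \<Rightarrow> 'a \<times> 'a) \<Rightarrow> 'e set \<Rightarrow> 'e set \<Rightarrow> bool" where
  "spanning_tree V ends E T =
     (T \<subseteq> E \<and> connected_sub V ends T \<and> (\<forall>e\<in>T. \<not> connected_sub V ends (T - {e})))"

definition is_mst :: "'a set \<Rightarrow> ('e \<Rightarrow> 'a \<times> 'a) \<Rightarrow> ('e \<Rightarrow> real) \<Rightarrow> 'e set \<Rightarrow> 'e set \<Rightarrow> bool" where
  "is_mst V ends w E T =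
     (spanning_tree V ends E T \<and> (\<forall>T'. spanning_tree V ends E T' \<longrightarrow> sum w T \<le> sum w T'))"

definition comp_of :: "'a set \<Rightarrow> ('e \<Rightarrow> 'a \<times> 'a) \<Rightarrow> 'e set \<Rightarrow> 'a \<Rightarrow> 'a set" where
  "comp_of V ends S x = {y \<in> V. reach ends S x y}"

definition crosses :: "('e \<Rightarrow> 'a \<times> 'a) \<Rightarrow> 'a set \<Rightarrow> 'e \<Rightarrow> bool" where
  "crosses ends S e = ((fst (ends e) \<in> S) \<noteq> (snd (ends e) \<in> S))"

definition complete_cut :: "'e set \<Rightarrow> ('e \<Rightarrow> 'a \<times> 'a) \<Rightarrow> 'a set \<Rightarrow> 'e set" where
  "complete_cut E ends S = {e \<in> E. crosses ends S e}"

definition partial_cut :: "'e set \<Rightarrow> ('e \<Rightarrow> 'a \<times> 'a) \<Rightarrow> ('e \<Rightarrow> real) \<Rightarrow> 'a set \<Rightarrow> real \<Rightarrow> 'e set" where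
  "partial_cut E ends w S W = {e \<in> complete_cut E ends S. w e < W}"

(* vertex set V_cc of the contracted graph: components of (V, T - F) *)
definition Vcc :: "'v set \<Rightarrow> ('e \<Rightarrow> 'v \<times> 'v) \<Rightarrow> 'e set \<Rightarrow> 'e set \<Rightarrow> 'v set set" where
  "Vcc V ends T F = comp_of V ends (T - F) ` V"

definition ends_cc :: "'v set \<Rightarrow> ('e \<Rightarrow> 'v \<times> 'v) \<Rightarrow> 'e set \<Rightarrow> 'e set \<Rightarrow> 'e \<Rightarrow> 'v set \<times> 'v set" where
  "ends_cc V ends T F e =
     (comp_of V ends (T - F) (fst (ends e)), comp_of V ends (T - F) (snd (ends e)))"

definition kmax :: "('a \<Rightarrow> nat) \<Rightarrow> 'a set \<Rightarrow> nat" where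
  "kmax k S = Max (k ` S)"

definition Xsel :: "('a \<Rightarrow> nat) \<Rightarrow> 'a set \<Rightarrow> 'a set \<Rightarrow> bool \<Rightarrow> 'a set" where
  "Xsel k L R b =
     (if kmax k L < kmax k R then L else if kmax k R < kmax k L then R else if b then L else R)"

(* counters before step i (0-based) *)
primrec cnt :: "(nat \<Rightarrow> 'a set) \<Rightarrow> (nat \<Rightarrow> 'a set) \<Rightarrow> (nat \<Rightarrow> bool) \<Rightarrow> nat \<Rightarrow> 'a \<Rightarrow> nat" where
  "cnt Lf Rf sel 0 = (\<lambda>A. 0)"
| "cnt Lf Rf sel (Suc i) =
     (\<lambda>A. cnt Lf Rf sel i A +
           (if A \<in> Xsel (cnt Lf Rf sel i) (Lf i) (Rf i) (sel i) then 1 else 0))"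

(* L_i, R_i (0-based i): components, in the forest formed by the first i edges of es,
   of the two endpoints of es!i *)
definition Lside :: "'a set \<Rightarrow> ('e \<Rightarrow> 'a \<times> 'a) \<Rightarrow> 'e list \<Rightarrow> nat \<Rightarrow> 'a set" where
  "Lside Vc ec es i = comp_of Vc ec (set (take i es)) (fst (ec (es ! i)))"

definition Rside :: "'a set \<Rightarrow> ('e \<Rightarrow> 'a \<times> 'a) \<Rightarrow> 'e list \<Rightarrow> nat \<Rightarrow> 'a set" where
  "Rside Vc ec es i = comp_of Vc ec (set (take i es)) (snd (ec (es ! i)))"

definition Xset :: "'v set \<Rightarrow> ('e \<Rightarrow> 'v \<times> 'v) \<Rightarrow> 'e set \<Rightarrow> 'e set \<Rightarrow> 'e list
                     \<Rightarrow> (nat \<Rightarrow> bool) \<Rightarrow> nat \<Rightarrow> 'v set set" where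
  "Xset V ends T F es sel i =
     (let Vc = Vcc V ends T F; ec = ends_cc V ends T F;
          L = Lside Vc ec es; R = Rside Vc ec es
      in Xsel (cnt L R sel i) (L i) (R i) (sel i))"

(* C_i = C_G(X_i, w(e'_i)), X_i identified with the union of its components *)
definition Ccut :: "'v set \<Rightarrow> 'e set \<Rightarrow> ('e \<Rightarrow> 'v \<times> 'v) \<Rightarrow> ('e \<Rightarrow> real) \<Rightarrow> 'e set \<Rightarrow> 'e set
                     \<Rightarrow> 'e list \<Rightarrow> (nat \<Rightarrow> bool) \<Rightarrow> nat \<Rightarrow> 'e set" where
  "Ccut V E ends w T F es sel i =
     partial_cut E ends w (\<Union> (Xset V ends T F es sel i)) (w (es ! i))"

end

theory Submission
  imports Defs
begin

(* Each counter k(A) counts the steps i < t - 1 with A \<in> X_i. Since X_i is the side of e'_i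
   whose maximal counter is smaller, a component A whose counter reaches m lies in a component
   of the forest {e'_1, ..., e'_i} with at least 2^m elements (the union of L_i and R_i, each of
   size at least 2^(k(A) before step i)); hence k(A) \<le> log t throughout.
   By the cut property of the minimum spanning tree T'_cc, an edge crossing X_i that is lighter
   than e'_i is not an edge of G', so C_i \<subseteq> F, and every f \<in> C_i has an end component in X_i.
   Charging c(f) to the two end components of f gives
   \<Sum> c(C_i) \<le> \<Sum>_{f \<in> F} c(f) (k(A_u) + k(A_v)) \<le> 2 B log t, and t \<le> n. *)

section \<open>Reachability and components\<close>

lemma reach_refl [simp]: "reach ends S x x"
  by (simp add: reach_def)

lemma reach_trans: "reach ends S x y \<Longrightarrow> reach ends S y z \<Longrightarrow> reach ends S x z"
  unfolding reach_def by (rule rtranclp_trans)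

lemma reach_sym: "reach ends S x y \<Longrightarrow> reach ends S y x"
  unfolding reach_def by (rule sympD[OF symp_rtranclp]) (auto intro: sympI)

lemma reach_edge: "e \<in> S \<Longrightarrow> reach ends S (fst (ends e)) (snd (ends e))"
  unfolding reach_def by (rule r_into_rtranclp) (metis prod.collapse)

lemma reach_mono: "S \<subseteq> S' \<Longrightarrow> reach ends S x y \<Longrightarrow> reach ends S' x y"
  unfolding reach_def by (erule rtranclp_mono[THEN predicate2D, rotated]) blast

lemma reach_empty: "reach ends {} x y \<Longrightarrow> x = y"
  unfolding reach_def by (induction rule: rtranclp_induct) auto

lemma reach_if_edges_reach:
  assumes "reach ends S x y" and "\<forall>e\<in>S. reach ends S' (fst (ends e)) (snd (ends e))"
  shows "reach ends S' x y"
  using assms(1) unfolding reach_def[of ends S]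
proof (induction rule: rtranclp_induct)
  case (step y z)
  then obtain e where "e \<in> S" "ends e = (y, z) \<or> ends e = (z, y)" by blast
  with assms(2) have "reach ends S' y z" by (metis fst_conv snd_conv reach_sym)
  with step.IH show ?case by (rule reach_trans)
qed simp

lemma reach_remove_edge:
  assumes "reach ends S a b" and "ends g = (p, q)"
  shows "reach ends (S - {g}) a b
    \<or> reach ends (S - {g}) a p \<and> reach ends (S - {g}) q b
    \<or> reach ends (S - {g}) a q \<and> reach ends (S - {g}) p b"
  using assms(1) unfolding reach_def[of ends S]
proof (induction rule: rtranclp_induct)
  case (step y z)
  then obtain e where e: "e \<in> S" "ends e = (y, z) \<or> ends e = (z, y)" by blast
  show ?case
  proof (cases "e = g")
    case True
    with e assms(2) have "y = p \<and> z = q \<or> y = q \<and> z = p" by auto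
    with step.IH show ?thesis by (metis reach_refl reach_sym reach_trans)
  next
    case False
    with e have "reach ends (S - {g}) y z"
      by (metis DiffI singletonD reach_edge reach_sym fst_conv snd_conv)
    with step.IH show ?thesis by (metis reach_trans)
  qed
qed simp

lemma reach_crossing_edge:
  assumes "reach ends S a b" and "(a \<in> X) \<noteq> (b \<in> X)"
  obtains g where "g \<in> S" and "crosses ends X g"
  using assms unfolding reach_def
proof (induction arbitrary: thesis rule: rtranclp_induct)
  case (step y z)
  then obtain e where e: "e \<in> S" "ends e = (y, z) \<or> ends e = (z, y)" by blast
  show ?case
  proof (cases "(y \<in> X) = (z \<in> X)")
    case True
    with step show ?thesis by blast
  next
    case False
    with e step.prems(1)[of e] show ?thesis unfolding crosses_def by auto
  qed
qed simp

lemma comp_of_self: "x \<in> V \<Longrightarrow> x \<in> comp_of V ends S x"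
  by (simp add: comp_of_def)

lemma comp_of_subset: "comp_of V ends S x \<subseteq> V"
  by (auto simp: comp_of_def)

lemma finite_comp_of: "finite V \<Longrightarrow> finite (comp_of V ends S x)"
  using comp_of_subset by (rule finite_subset)

lemma comp_of_mono: "S \<subseteq> S' \<Longrightarrow> comp_of V ends S x \<subseteq> comp_of V ends S' x"
  by (auto simp: comp_of_def intro: reach_mono)

lemma comp_of_eq: "reach ends S x y \<Longrightarrow> comp_of V ends S x = comp_of V ends S y"
  unfolding comp_of_def by (metis reach_sym reach_trans)

lemma comp_of_eq_if_mem: "y \<in> comp_of V ends S x \<Longrightarrow> comp_of V ends S y = comp_of V ends S x"
  using comp_of_eq[of ends S x y V] by (simp add: comp_of_def)

lemma comp_of_disjoint:
  "\<not> reach ends S x y \<Longrightarrow> comp_of V ends S x \<inter> comp_of V ends S y = {}"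
  unfolding comp_of_def by (auto intro: reach_trans[OF _ reach_sym])

lemma not_crosses_comp_of:
  assumes "e \<in> S" and "fst (ends e) \<in> V" and "snd (ends e) \<in> V"
  shows "\<not> crosses ends (comp_of V ends S x) e"
  using assms reach_edge[OF assms(1)] reach_sym
  unfolding crosses_def comp_of_def by (metis (mono_tags) mem_Collect_eq reach_trans)

lemma mem_Union_comps_iff:
  assumes "Y \<subseteq> comp_of V ends S ` V" and "u \<in> V"
  shows "u \<in> \<Union> Y \<longleftrightarrow> comp_of V ends S u \<in> Y"
  using assms comp_of_self[OF assms(2)] comp_of_eq_if_mem by fastforce

lemma comps_of_edge_subset_comp_insert:
  assumes "A \<in> comp_of V ends S (fst (ends e)) \<union> comp_of V ends S (snd (ends e))"
  shows "comp_of V ends S (fst (ends e)) \<union> comp_of V ends S (snd (ends e))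
    \<subseteq> comp_of V ends (insert e S) A"
proof -
  let ?C = "comp_of V ends (insert e S)"
  have "comp_of V ends S (fst (ends e)) \<subseteq> ?C (fst (ends e))"
    and "comp_of V ends S (snd (ends e)) \<subseteq> ?C (snd (ends e))"
    by (simp_all add: comp_of_mono subset_insertI)
  moreover have "?C (fst (ends e)) = ?C (snd (ends e))"
    by (rule comp_of_eq[OF reach_edge]) simp
  ultimately have sub: "comp_of V ends S (fst (ends e)) \<union> comp_of V ends S (snd (ends e))
      \<subseteq> ?C (fst (ends e))" by simp
  with assms have "?C A = ?C (fst (ends e))" by (intro comp_of_eq_if_mem) blast
  with sub show ?thesis by simp
qed

lemma card_sides_le_card_comp_insert:
  assumes "finite V" and "\<not> reach ends S (fst (ends e)) (snd (ends e))"
    and "A \<in> comp_of V ends S (fst (ends e)) \<union> comp_of V ends S (snd (ends e))"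
  shows "card (comp_of V ends S (fst (ends e))) + card (comp_of V ends S (snd (ends e)))
    \<le> card (comp_of V ends (insert e S) A)"
proof -
  have "card (comp_of V ends S (fst (ends e))) + card (comp_of V ends S (snd (ends e)))
      = card (comp_of V ends S (fst (ends e)) \<union> comp_of V ends S (snd (ends e)))"
    using comp_of_disjoint[OF assms(2)] by (simp add: card_Un_disjoint finite_comp_of assms(1))
  also have "\<dots> \<le> card (comp_of V ends (insert e S) A)"
    using comps_of_edge_subset_comp_insert[OF assms(3)] by (intro card_mono finite_comp_of assms(1))
  finally show ?thesis .
qed

section \<open>Edges versus components\<close>

lemma card_image_le_if_factors:
  assumes "finite A" and "\<And>x y. x \<in> A \<Longrightarrow> y \<in> A \<Longrightarrow> g x = g y \<Longrightarrow> h x = h y"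
  shows "card (h ` A) \<le> card (g ` A)"
proof -
  define rep where "rep D = (SOME x. x \<in> A \<and> g x = D)" for D
  have "h ` A \<subseteq> (h \<circ> rep) ` g ` A"
  proof
    fix z assume "z \<in> h ` A"
    then obtain x where x: "x \<in> A" "z = h x" by blast
    have "rep (g x) \<in> A \<and> g (rep (g x)) = g x"
      unfolding rep_def by (rule someI) (use x in blast)
    with x have "z = (h \<circ> rep) (g x)" using assms(2)[of x "rep (g x)"] by simp
    with x(1) show "z \<in> (h \<circ> rep) ` g ` A" by blast
  qed
  then show ?thesis by (rule surj_card_le[rotated]) (use assms(1) in simp)
qed

lemma card_comps_le_insert_edge:
  assumes "finite U"
  shows "card (comp_of U ends S ` U) \<le> card (comp_of U ends (insert e S) ` U) + 1"
proof -
  define p where "p = fst (ends e)"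
  \<comment> \<open>among vertices not reaching \<open>p\<close>, the new edge merges no components\<close>
  define U' where "U' = {x \<in> U. \<not> reach ends S p x}"
  have fin': "finite U'" using assms unfolding U'_def by simp
  have "comp_of U ends S ` U \<subseteq> insert (comp_of U ends S p) (comp_of U ends S ` U')"
  proof
    fix C assume "C \<in> comp_of U ends S ` U"
    then obtain x where x: "x \<in> U" "C = comp_of U ends S x" by blast
    show "C \<in> insert (comp_of U ends S p) (comp_of U ends S ` U')"
    proof (cases "reach ends S p x")
      case True
      with x show ?thesis using comp_of_eq[OF True] by simp
    next
      case False
      with x show ?thesis unfolding U'_def by blast
    qed
  qed
  then have "card (comp_of U ends S ` U) \<le> card (insert (comp_of U ends S p) (comp_of U ends S ` U'))"
    by (rule card_mono[rotated]) (use fin' in simp)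
  also have "\<dots> \<le> card (comp_of U ends S ` U') + 1"
    by (simp add: card_insert_if fin')
  also have "card (comp_of U ends S ` U') \<le> card (comp_of U ends (insert e S) ` U')"
  proof (rule card_image_le_if_factors)
    fix x y assume xy: "x \<in> U'" "y \<in> U'"
      and "comp_of U ends (insert e S) x = comp_of U ends (insert e S) y"
    then have "y \<in> comp_of U ends (insert e S) x"
      using comp_of_self[of y U] unfolding U'_def by simp
    then have "reach ends (insert e S) x y" by (simp add: comp_of_def)
    have S0: "insert e S - {e} \<subseteq> S" by blast
    have "\<not> reach ends (insert e S - {e}) x p" "\<not> reach ends (insert e S - {e}) p y"
      using xy unfolding U'_def by (metis (mono_tags) mem_Collect_eq reach_mono[OF S0] reach_sym)+
    with reach_remove_edge[OF \<open>reach ends (insert e S) x y\<close>, of e p "snd (ends e)"]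
    have "reach ends S x y" unfolding p_def using reach_mono[OF S0] by auto
    then show "comp_of U ends S x = comp_of U ends S y" by (rule comp_of_eq)
  qed (rule fin')
  also have "card (comp_of U ends (insert e S) ` U') \<le> card (comp_of U ends (insert e S) ` U)"
    by (rule card_mono) (use assms U'_def in auto)
  finally show ?thesis by simp
qed

lemma card_le_card_edges_plus_card_comps:
  assumes "finite S" and "finite U"
  shows "card U \<le> card S + card (comp_of U ends S ` U)"
  using assms(1)
proof (induction rule: finite_induct)
  case empty
  have "comp_of U ends {} ` U = (\<lambda>x. {x}) ` U"
    by (intro image_cong refl) (auto simp: comp_of_def dest: reach_empty)
  then show ?case by (simp add: card_image)
next
  case (insert e S)
  then show ?case using card_comps_le_insert_edge[OF assms(2), of ends S e] by simp
qed

lemma card_le_Suc_card_if_connected: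
  assumes "finite S" and "\<forall>x\<in>U. \<forall>y\<in>U. reach ends S x y"
  shows "card U \<le> card S + 1"
proof (cases "finite U \<and> U \<noteq> {}")
  case True
  then have "comp_of U ends S ` U = {U}"
    using assms(2) by (auto simp: comp_of_def)
  with True card_le_card_edges_plus_card_comps[OF assms(1), of U ends] show ?thesis by simp
qed auto

section \<open>Spanning trees and the cut property\<close>

lemma finite_minimal_subset:
  assumes "finite S" and "P S"
  obtains S' where "S' \<subseteq> S" and "P S'" and "\<And>g. g \<in> S' \<Longrightarrow> \<not> P (S' - {g})"
proof -
  have "finite {S'. S' \<subseteq> S \<and> P S'}" using assms(1) by simp
  then obtain S' where S': "S' \<subseteq> S" "P S'"
    and min: "\<And>S''. S'' \<subseteq> S \<and> P S'' \<Longrightarrow> S'' \<subseteq> S' \<Longrightarrow> S' = S''"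
    using finite_has_minimal2[of "{S'. S' \<subseteq> S \<and> P S'}" S] assms(2) by auto
  show thesis
  proof (rule that[OF S'])
    fix g assume "g \<in> S'"
    then show "\<not> P (S' - {g})" using min[of "S' - {g}"] S'(1) by blast
  qed
qed

lemma connected_sub_if_edges_reach:
  assumes "connected_sub V ends T" and "\<forall>e\<in>T. reach ends T' (fst (ends e)) (snd (ends e))"
  shows "connected_sub V ends T'"
  using assms(1) reach_if_edges_reach[OF _ assms(2)] unfolding connected_sub_def by blast

lemma spanning_tree_subset_exists:
  assumes "finite S" and "S \<subseteq> E" and "connected_sub V ends S"
  obtains T where "T \<subseteq> S" and "spanning_tree V ends E T"
  using finite_minimal_subset[of S "connected_sub V ends", OF assms(1,3)] assms(2)
  unfolding spanning_tree_def by (metis order_trans)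

lemma spanning_tree_not_reach_without_edge:
  assumes "spanning_tree V ends E T" and "g \<in> T" and "S \<subseteq> T - {g}"
  shows "\<not> reach ends S (fst (ends g)) (snd (ends g))"
proof
  assume "reach ends S (fst (ends g)) (snd (ends g))"
  then have "\<forall>e\<in>T. reach ends (T - {g}) (fst (ends e)) (snd (ends e))"
    using assms(3) reach_mono reach_edge by (metis DiffI singletonD)
  with assms(1) have "connected_sub V ends (T - {g})"
    unfolding spanning_tree_def by (blast intro: connected_sub_if_edges_reach)
  with assms(1,2) show False unfolding spanning_tree_def by blast
qed

lemma spanning_tree_prefix_not_reach:
  assumes "spanning_tree V ends E T" and "set es = T" and "distinct es" and "i < length es"
  shows "\<not> reach ends (set (take i es)) (fst (ends (es ! i))) (snd (ends (es ! i)))"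
proof (rule spanning_tree_not_reach_without_edge[OF assms(1)])
  show "es ! i \<in> T" using assms(2,4) by auto
  have "distinct (take i es @ [es ! i])"
    using distinct_take[OF assms(3), of "Suc i"] assms(4) by (simp add: take_Suc_conv_app_nth)
  then show "set (take i es) \<subseteq> T - {es ! i}"
    using assms(2) set_take_subset[of i es] by auto
qed

lemma card_le_Suc_length_if_spanning_tree:
  assumes "spanning_tree V ends E T" and "finite T" and "set es = T" and "distinct es"
  shows "card V \<le> length es + 1"
  using card_le_Suc_card_if_connected[OF assms(2), of V ends] assms(1) distinct_card[OF assms(4)]
  unfolding spanning_tree_def connected_sub_def assms(3) by simp

lemma reach_ends_of_removed_edge:
  assumes "reach ends S a b" and "\<not> reach ends (S - {g}) a b"
    and "S - {g} \<subseteq> S'" and "reach ends S' a b"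
  shows "reach ends S' (fst (ends g)) (snd (ends g))"
proof -
  let ?p = "fst (ends g)" and ?q = "snd (ends g)"
  have "reach ends (S - {g}) a ?p \<and> reach ends (S - {g}) ?q b
      \<or> reach ends (S - {g}) a ?q \<and> reach ends (S - {g}) ?p b"
    using reach_remove_edge[OF assms(1), of g ?p ?q] assms(2) by simp
  then have "reach ends S' a ?p \<and> reach ends S' ?q b \<or> reach ends S' a ?q \<and> reach ends S' ?p b"
    using reach_mono[OF assms(3), of ends] by blast
  with assms(4) show ?thesis by (metis reach_sym reach_trans)
qed

lemma is_mst_exchange:
  assumes mst: "is_mst V ends w E T" and "finite E" and "\<forall>e\<in>E. 0 \<le> w e"
    and "g \<in> T" and "f \<in> E"
    and "reach ends (insert f (T - {g})) (fst (ends g)) (snd (ends g))"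
  shows "w g \<le> w f"
proof -
  let ?T' = "insert f (T - {g})"
  have TE: "T \<subseteq> E" and conn: "connected_sub V ends T"
    using mst unfolding is_mst_def spanning_tree_def by blast+
  have finT: "finite T" using TE assms(2) by (rule finite_subset)
  have "\<forall>e\<in>T. reach ends ?T' (fst (ends e)) (snd (ends e))"
    using assms(6) by (metis DiffI insertCI reach_edge singletonD)
  with conn have "connected_sub V ends ?T'" by (rule connected_sub_if_edges_reach)
  then obtain T2 where T2: "T2 \<subseteq> ?T'" "spanning_tree V ends E T2"
    using spanning_tree_subset_exists[of ?T' E V ends] finT TE assms(5) by blast
  have "sum w T \<le> sum w T2"
    using mst T2(2) unfolding is_mst_def by blast
  also have "\<dots> \<le> sum w ?T'"
    by (rule sum_mono2) (use finT T2(1) TE assms(3,5) in auto)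
  also have "\<dots> \<le> w f + sum w (T - {g})"
    using finT assms(3,5) by (cases "f \<in> T - {g}") (auto simp: insert_absorb)
  also have "\<dots> = w f + sum w T - w g"
    using sum_diff1[OF finT, of w g] assms(4) by simp
  finally show ?thesis by simp
qed

lemma nth_in_set_take: "j < i \<Longrightarrow> j < length xs \<Longrightarrow> xs ! j \<in> set (take i xs)"
  by (metis in_set_conv_nth length_take min_less_iff_conj nth_take)

lemma sorted_nth_le_if_crosses_prefix_comp:
  assumes "sorted (map w es)" and "i < length es" and "g \<in> set es"
    and "fst (ends g) \<in> V" and "snd (ends g) \<in> V"
    and "crosses ends (comp_of V ends (set (take i es)) x) g"
  shows "w (es ! i) \<le> w g"
proof -
  have "g \<notin> set (take i es)"
  proof
    assume "g \<in> set (take i es)"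
    from not_crosses_comp_of[of g _ ends, OF this assms(4,5)] assms(6) show False by contradiction
  qed
  moreover obtain j where j: "j < length es" "es ! j = g"
    using assms(3) by (metis in_set_conv_nth)
  ultimately have "i \<le> j" using nth_in_set_take[of j i es] by fastforce
  then show ?thesis using sorted_nth_mono[OF assms(1), of i j] j by simp
qed

lemma is_mst_sorted_prefix_cut:
  assumes mst: "is_mst V ends w E T" and "finite E" and "\<forall>e\<in>E. 0 \<le> w e"
    and ends_in: "\<forall>e\<in>E. fst (ends e) \<in> V \<and> snd (ends e) \<in> V"
    and es: "set es = T" "sorted (map w es)" "i < length es"
    and f: "f \<in> E" "crosses ends (comp_of V ends (set (take i es)) x) f"
  shows "w (es ! i) \<le> w f"
proof -
  let ?X = "comp_of V ends (set (take i es)) x"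
  let ?a = "fst (ends f)" and ?b = "snd (ends f)"
  have TE: "T \<subseteq> E" and conn: "connected_sub V ends T"
    using mst unfolding is_mst_def spanning_tree_def by blast+
  have "finite T" using TE assms(2) by (rule finite_subset)
  moreover have "reach ends T ?a ?b" using conn ends_in f(1) unfolding connected_sub_def by blast
  ultimately obtain S where S: "S \<subseteq> T" "reach ends S ?a ?b"
    and min: "\<And>g. g \<in> S \<Longrightarrow> \<not> reach ends (S - {g}) ?a ?b"
    using finite_minimal_subset[of T "\<lambda>S. reach ends S ?a ?b"] by blast
  have "(?a \<in> ?X) \<noteq> (?b \<in> ?X)" using f(2) unfolding crosses_def .
  then obtain g where g: "g \<in> S" "crosses ends ?X g"
    by (rule reach_crossing_edge[OF S(2)])
  have "g \<in> set es" "g \<in> E" using g(1) S(1) es(1) TE by blast+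
  with g(2) ends_in have "w (es ! i) \<le> w g"
    by (intro sorted_nth_le_if_crosses_prefix_comp[OF es(2,3)]) auto
  also have "w g \<le> w f"
  proof (rule is_mst_exchange[OF mst assms(2,3) _ f(1)])
    show "g \<in> T" using g(1) S(1) by blast
    show "reach ends (insert f (T - {g})) (fst (ends g)) (snd (ends g))"
    proof (rule reach_ends_of_removed_edge[OF S(2) min[OF g(1)]])
      show "S - {g} \<subseteq> insert f (T - {g})" using S(1) by blast
      show "reach ends (insert f (T - {g})) ?a ?b" by (rule reach_edge) simp
    qed
  qed
  finally show ?thesis .
qed

section \<open>The counters\<close>

lemma cnt_eq_card:
  "cnt L R sel n A = card {i. i < n \<and> A \<in> Xsel (cnt L R sel i) (L i) (R i) (sel i)}"
proof (induction n)
  case (Suc n)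
  have "{i. i < Suc n \<and> A \<in> Xsel (cnt L R sel i) (L i) (R i) (sel i)}
      = {i. i < n \<and> A \<in> Xsel (cnt L R sel i) (L i) (R i) (sel i)}
        \<union> (if A \<in> Xsel (cnt L R sel n) (L n) (R n) (sel n) then {n} else {})"
    by (auto simp: less_Suc_eq)
  with Suc show ?case by simp
qed simp

lemma Xsel_le_kmax:
  assumes "finite L" and "finite R" and "A \<in> Xsel k L R b"
  shows "k A \<le> kmax k L \<and> k A \<le> kmax k R"
proof -
  have "A \<in> L \<Longrightarrow> k A \<le> kmax k L" "A \<in> R \<Longrightarrow> k A \<le> kmax k R"
    using assms(1,2) by (simp_all add: kmax_def)
  with assms(3) show ?thesis unfolding Xsel_def by (auto split: if_splits)
qed

lemma two_pow_kmax_le_card_comp: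
  assumes "finite V" and "x \<in> V" and "\<And>B. B \<in> V \<Longrightarrow> 2 ^ k B \<le> card (comp_of V ends S B)"
  shows "2 ^ kmax k (comp_of V ends S x) \<le> card (comp_of V ends S x)"
proof -
  have "finite (comp_of V ends S x)" using assms(1) by (rule finite_comp_of)
  moreover have "comp_of V ends S x \<noteq> {}" using comp_of_self[OF assms(2)] by blast
  ultimately have "kmax k (comp_of V ends S x) \<in> k ` comp_of V ends S x"
    unfolding kmax_def by (intro Max_in) auto
  then obtain B where B: "B \<in> comp_of V ends S x" "kmax k (comp_of V ends S x) = k B" by blast
  have "B \<in> V" using comp_of_subset B(1) by (rule subsetD)
  then have "2 ^ k B \<le> card (comp_of V ends S B)" by (rule assms(3))
  with B(2) comp_of_eq_if_mem[OF B(1)] show ?thesis by simp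
qed

lemma two_pow_selected_le_card_sides:
  assumes "finite V" and "a \<in> V" and "b \<in> V"
    and "\<And>B. B \<in> V \<Longrightarrow> 2 ^ k B \<le> card (comp_of V ends S B)"
    and "A \<in> Xsel k (comp_of V ends S a) (comp_of V ends S b) sel"
  shows "2 ^ k A \<le> card (comp_of V ends S a) \<and> 2 ^ k A \<le> card (comp_of V ends S b)"
proof -
  have "k A \<le> kmax k (comp_of V ends S a) \<and> k A \<le> kmax k (comp_of V ends S b)"
    using assms(5) by (intro Xsel_le_kmax finite_comp_of assms(1))
  moreover have "2 ^ kmax k (comp_of V ends S a) \<le> card (comp_of V ends S a)"
    and "2 ^ kmax k (comp_of V ends S b) \<le> card (comp_of V ends S b)"
    using assms(1-4) by (blast intro: two_pow_kmax_le_card_comp)+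
  ultimately show ?thesis by (meson order_trans one_le_numeral power_increasing)
qed

lemma two_pow_cnt_le_card_comp:
  fixes ec :: "'e \<Rightarrow> 'a \<times> 'a"
  assumes fin: "finite V" and ends_in: "\<forall>e\<in>set es. fst (ec e) \<in> V \<and> snd (ec e) \<in> V"
    and forest: "\<forall>i<length es. \<not> reach ec (set (take i es)) (fst (ec (es ! i))) (snd (ec (es ! i)))"
    and "i \<le> length es" and "A \<in> V"
  shows "2 ^ cnt (Lside V ec es) (Rside V ec es) sel i A \<le> card (comp_of V ec (set (take i es)) A)"
  using assms(4,5)
proof (induction i arbitrary: A)
  case 0
  have "A \<in> comp_of V ec (set (take 0 es)) A" using "0.prems"(2) by (rule comp_of_self)
  then show ?case using finite_comp_of[OF fin] by (auto simp: Suc_le_eq card_gt_0_iff)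
next
  case (Suc i)
  define k where "k = cnt (Lside V ec es) (Rside V ec es) sel i"
  define S where "S = set (take i es)"
  let ?L = "Lside V ec es i" and ?R = "Rside V ec es i" and ?C = "comp_of V ec (insert (es ! i) S)"
  have i: "i < length es" using Suc.prems(1) by simp
  then have prefix: "set (take (Suc i) es) = insert (es ! i) S"
    unfolding S_def by (simp add: take_Suc_conv_app_nth)
  have IH: "2 ^ k B \<le> card (comp_of V ec S B)" if "B \<in> V" for B
    using Suc.IH[OF _ that] i unfolding k_def S_def by simp
  have LR: "?L = comp_of V ec S (fst (ec (es ! i)))" "?R = comp_of V ec S (snd (ec (es ! i)))"
    unfolding Lside_def Rside_def S_def by simp_all
  have ends_i: "fst (ec (es ! i)) \<in> V" "snd (ec (es ! i)) \<in> V"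
    using ends_in i by simp_all
  have cnt_Suc: "cnt (Lside V ec es) (Rside V ec es) sel (Suc i) A
      = k A + (if A \<in> Xsel k ?L ?R (sel i) then 1 else 0)"
    unfolding k_def by simp
  show ?case
  proof (cases "A \<in> Xsel k ?L ?R (sel i)")
    case False
    have "2 ^ k A \<le> card (comp_of V ec S A)" by (rule IH[OF Suc.prems(2)])
    also have "\<dots> \<le> card (?C A)" by (intro card_mono finite_comp_of[OF fin] comp_of_mono) auto
    finally show ?thesis using False cnt_Suc prefix by simp
  next
    case True
    then have "2 ^ k A \<le> card ?L \<and> 2 ^ k A \<le> card ?R"
      unfolding LR by (intro two_pow_selected_le_card_sides fin ends_i IH)
    moreover have "card ?L + card ?R \<le> card (?C A)"
    proof -
      have "A \<in> ?L \<union> ?R" using True unfolding Xsel_def by (auto split: if_splits)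
      with forest i show ?thesis
        unfolding LR S_def by (intro card_sides_le_card_comp_insert fin) auto
    qed
    ultimately show ?thesis using True cnt_Suc prefix by simp
  qed
qed

lemma card_selected_le_log:
  fixes ec :: "'e \<Rightarrow> 'a \<times> 'a"
  assumes fin: "finite V" and "\<forall>e\<in>set es. fst (ec e) \<in> V \<and> snd (ec e) \<in> V"
    and "\<forall>i<length es. \<not> reach ec (set (take i es)) (fst (ec (es ! i))) (snd (ec (es ! i)))"
    and "n \<le> length es" and "A \<in> V"
  shows "real (card {i. i < n \<and> A \<in> Xsel (cnt (Lside V ec es) (Rside V ec es) sel i)
      (Lside V ec es i) (Rside V ec es i) (sel i)}) \<le> log 2 (card V)"
proof -
  have "2 ^ cnt (Lside V ec es) (Rside V ec es) sel n A \<le> card (comp_of V ec (set (take n es)) A)"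
    by (rule two_pow_cnt_le_card_comp[OF assms])
  also have "\<dots> \<le> card V" by (rule card_mono[OF fin comp_of_subset])
  finally show ?thesis by (subst (asm) cnt_eq_card) (rule le_log2_of_power)
qed

section \<open>Cuts in the contracted graph\<close>

lemma sum_of_bool_lessThan:
  "(\<Sum>i<n. of_bool (P i) :: real) = real (card {i. i < n \<and> P i})" for n :: nat
proof -
  have "{i. i < n \<and> P i} = {..<n} \<inter> {i. P i}" by auto
  then show ?thesis by simp
qed

lemma sum_cut_costs_le:
  fixes c :: "'e \<Rightarrow> real" and ec :: "'e \<Rightarrow> 'a \<times> 'a" and n :: nat
  assumes "finite F" and c_nonneg: "\<forall>f\<in>F. 0 \<le> c f"
    and ends_in: "\<forall>f\<in>F. fst (ec f) \<in> D \<and> snd (ec f) \<in> D"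
    and cuts: "\<And>i f. i < n \<Longrightarrow> f \<in> C i \<Longrightarrow> f \<in> F \<and> crosses ec (X i) f"
    and selected: "\<And>A. A \<in> D \<Longrightarrow> real (card {i. i < n \<and> A \<in> X i}) \<le> K"
  shows "(\<Sum>i<n. sum c (C i)) \<le> 2 * sum c F * K"
proof -
  let ?hits = "\<lambda>i f. of_bool (fst (ec f) \<in> X i) + of_bool (snd (ec f) \<in> X i) :: real"
  have "sum c (C i) \<le> (\<Sum>f\<in>F. c f * ?hits i f)" if "i < n" for i
  proof -
    have "sum c (C i) = (\<Sum>f\<in>F. c f * of_bool (f \<in> C i))"
      using cuts[OF that] assms(1) by (simp add: Int_absorb1 subset_iff)
    also have "\<dots> \<le> (\<Sum>f\<in>F. c f * ?hits i f)"
      using cuts[OF that] c_nonneg unfolding crosses_def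
      by (intro sum_mono mult_left_mono) auto
    finally show ?thesis .
  qed
  then have "(\<Sum>i<n. sum c (C i)) \<le> (\<Sum>i<n. \<Sum>f\<in>F. c f * ?hits i f)"
    by (intro sum_mono) simp
  also have "\<dots> = (\<Sum>f\<in>F. c f * (\<Sum>i<n. ?hits i f))"
    by (subst sum.swap) (simp add: sum_distrib_left)
  also have "\<dots> = (\<Sum>f\<in>F. c f * (real (card {i. i < n \<and> fst (ec f) \<in> X i})
      + real (card {i. i < n \<and> snd (ec f) \<in> X i})))"
    by (simp add: sum.distrib sum_of_bool_lessThan)
  also have "\<dots> \<le> (\<Sum>f\<in>F. c f * (2 * K))"
  proof (intro sum_mono mult_left_mono)
    fix f assume f: "f \<in> F"
    then show "0 \<le> c f" using c_nonneg by blast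
    from f ends_in have "fst (ec f) \<in> D" "snd (ec f) \<in> D" by auto
    from selected[OF this(1)] selected[OF this(2)]
    show "real (card {i. i < n \<and> fst (ec f) \<in> X i}) + real (card {i. i < n \<and> snd (ec f) \<in> X i})
        \<le> 2 * K" by simp
  qed
  also have "\<dots> = 2 * sum c F * K" by (simp add: sum_distrib_right[symmetric] mult.commute)
  finally show ?thesis .
qed

lemma ends_cc_in_Vcc:
  assumes "\<forall>e\<in>E. fst (ends e) \<in> V \<and> snd (ends e) \<in> V" and "E' \<subseteq> E"
  shows "\<forall>e\<in>E'. fst (ends_cc V ends T F e) \<in> Vcc V ends T F
    \<and> snd (ends_cc V ends T F e) \<in> Vcc V ends T F"
  using assms unfolding ends_cc_def Vcc_def by auto

lemma crosses_Union_Vcc_iff: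
  assumes "Y \<subseteq> Vcc V ends T F" and "fst (ends f) \<in> V" and "snd (ends f) \<in> V"
  shows "crosses ends (\<Union> Y) f \<longleftrightarrow> crosses (ends_cc V ends T F) Y f"
  using mem_Union_comps_iff[OF assms(1)[unfolded Vcc_def] assms(2)]
    mem_Union_comps_iff[OF assms(1)[unfolded Vcc_def] assms(3)]
  unfolding crosses_def ends_cc_def by simp

lemma Xset_eq_comp_of:
  "\<exists>x. Xset V ends T F es sel i = comp_of (Vcc V ends T F) (ends_cc V ends T F) (set (take i es)) x"
  unfolding Xset_def Xsel_def Lside_def Rside_def Let_def by auto

lemma Ccut_edge_crosses_Xset:
  assumes "finite E" and "\<forall>e\<in>E. 0 \<le> w e" and ends_in: "\<forall>e\<in>E. fst (ends e) \<in> V \<and> snd (ends e) \<in> V"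
    and mst: "is_mst (Vcc V ends T F) (ends_cc V ends T F) w (E - F) Tc"
    and es: "set es = Tc" "sorted (map w es)" "i < length es"
    and f: "f \<in> Ccut V E ends w T F es sel i"
  shows "f \<in> F \<and> crosses (ends_cc V ends T F) (Xset V ends T F es sel i) f"
proof -
  let ?X = "Xset V ends T F es sel i"
  obtain x where X: "?X = comp_of (Vcc V ends T F) (ends_cc V ends T F) (set (take i es)) x"
    using Xset_eq_comp_of by blast
  have fE: "f \<in> E" and cheap: "w f < w (es ! i)" and "crosses ends (\<Union> ?X) f"
    using f unfolding Ccut_def partial_cut_def complete_cut_def by simp_all
  moreover have "?X \<subseteq> Vcc V ends T F" unfolding X by (rule comp_of_subset)
  moreover have "fst (ends f) \<in> V" "snd (ends f) \<in> V" using ends_in fE by simp_all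
  ultimately have cr: "crosses (ends_cc V ends T F) ?X f" by (simp add: crosses_Union_Vcc_iff)
  have "f \<in> F"
  proof (rule ccontr)
    assume "f \<notin> F"
    with fE have "w (es ! i) \<le> w f"
      using is_mst_sorted_prefix_cut[OF mst _ _ ends_cc_in_Vcc[OF ends_in Diff_subset] es, of f x]
        assms(1,2) cr X by simp
    with cheap show False by simp
  qed
  with cr show ?thesis by blast
qed

lemma card_Xset_le_log:
  assumes "finite V" and ends_in: "\<forall>e\<in>E. fst (ends e) \<in> V \<and> snd (ends e) \<in> V"
    and tree: "spanning_tree (Vcc V ends T F) (ends_cc V ends T F) (E - F) Tc"
    and "set es = Tc" and "distinct es" and "n \<le> length es" and "A \<in> Vcc V ends T F"
  shows "real (card {i. i < n \<and> A \<in> Xset V ends T F es sel i}) \<le> log 2 (card (Vcc V ends T F))"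
proof -
  have "set es \<subseteq> E" using tree assms(4) unfolding spanning_tree_def by blast
  then have "\<forall>e\<in>set es. fst (ends_cc V ends T F e) \<in> Vcc V ends T F
      \<and> snd (ends_cc V ends T F e) \<in> Vcc V ends T F"
    by (rule ends_cc_in_Vcc[OF ends_in])
  moreover have "\<forall>i<length es. \<not> reach (ends_cc V ends T F) (set (take i es))
      (fst (ends_cc V ends T F (es ! i))) (snd (ends_cc V ends T F (es ! i)))"
    using spanning_tree_prefix_not_reach[OF tree assms(4,5)] by blast
  moreover have "finite (Vcc V ends T F)" using assms(1) unfolding Vcc_def by simp
  ultimately show ?thesis
    using card_selected_le_log[OF _ _ _ assms(6,7)] unfolding Xset_def Let_def by blast
qed

lemma card_Vcc_le: "finite V \<Longrightarrow> card (Vcc V ends T F) \<le> card V"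
  unfolding Vcc_def by (rule card_image_le)

theorem mainTheorem10:
  fixes V :: "'v set" and E :: "'e set" and ends :: "'e \<Rightarrow> 'v \<times> 'v"
    and w c :: "'e \<Rightarrow> real" and F T Tc :: "'e set" and es :: "'e list"
    and sel :: "nat \<Rightarrow> bool"
  assumes "finite V" and "V \<noteq> {}" and "finite E"
    and "\<forall>e\<in>E. fst (ends e) \<in> V \<and> snd (ends e) \<in> V"
    and "connected_sub V ends E"
    and "\<forall>e\<in>E. 0 \<le> w e" and "\<forall>e\<in>E. 0 < c e"
    and "F \<subseteq> E" and "connected_sub V ends (E - F)"
    and "is_mst V ends w E T"
    and "card (Vcc V ends T F) \<ge> 2"
    and "is_mst (Vcc V ends T F) (ends_cc V ends T F) w (E - F) Tc"
    and "distinct es" and "set es = Tc" and "sorted (map w es)"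
  shows "(\<Sum>i < card (Vcc V ends T F) - 1. sum c (Ccut V E ends w T F es sel i))
           \<le> 2 * sum c F * log 2 (card (Vcc V ends T F))
       \<and> 2 * sum c F * log 2 (card (Vcc V ends T F)) \<le> 2 * sum c F * log 2 (card V)"
proof
  let ?Vc = "Vcc V ends T F" and ?ec = "ends_cc V ends T F"
  have tree: "spanning_tree ?Vc ?ec (E - F) Tc" using assms(12) unfolding is_mst_def by blast
  have "finite Tc" using tree assms(3) unfolding spanning_tree_def by (meson finite_Diff finite_subset)
  \<comment> \<open>so that \<open>es ! i\<close> is a genuine edge of \<open>Tc\<close> for every summation index \<open>i\<close>\<close>
  then have n_le: "card ?Vc - 1 \<le> length es"
    using card_le_Suc_length_if_spanning_tree[OF tree _ assms(14,13)] by simp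
  show "(\<Sum>i < card ?Vc - 1. sum c (Ccut V E ends w T F es sel i)) \<le> 2 * sum c F * log 2 (card ?Vc)"
  proof (rule sum_cut_costs_le[where ec = ?ec and D = ?Vc])
    show "finite F" using assms(3,8) by (rule finite_subset[rotated])
    show "\<forall>f\<in>F. 0 \<le> c f" using assms(7,8) by force
    show "\<forall>f\<in>F. fst (?ec f) \<in> ?Vc \<and> snd (?ec f) \<in> ?Vc" by (rule ends_cc_in_Vcc[OF assms(4,8)])
    show "f \<in> F \<and> crosses ?ec (Xset V ends T F es sel i) f"
      if "i < card ?Vc - 1" and "f \<in> Ccut V E ends w T F es sel i" for i f
      using Ccut_edge_crosses_Xset[OF assms(3,6,4,12,14,15) _ that(2)] that(1) n_le by simp
  qed (rule card_Xset_le_log[OF assms(1,4) tree assms(14,13) n_le])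
  have "log 2 (card ?Vc) \<le> log 2 (card V)"
    using assms(1,11) card_Vcc_le by (intro log_mono) auto
  moreover have "0 \<le> sum c F" using assms(7,8) by (intro sum_nonneg) force
  ultimately show "2 * sum c F * log 2 (card ?Vc) \<le> 2 * sum c F * log 2 (card V)"
    by (simp add: mult_left_mono)
qed

end
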